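(* Fix $k\ge1$. For $\boldsymbol{\Delta}=(\Delta_1,\dots,\Delta_k)\in\mathbb{R}^k$, let $X(\boldsymbol{\Delta})=\bigotimes_{i=1}^k L(\Delta_i)$ and $A(\boldsymbol{\Delta})=\bigotimes_{i=1}^k L(\Delta_i)$ (an ancilla of the same form), with the sum Hamiltonians. Suppose $\Delta_1,\dots,\Delta_k$ are linearly independent over $\mathbb{Q}$, and let $\tau,\tau'$ be density operators on the (fixed) Hilbert space underlying $X$ such that $\tau'=\mathrm{Tr}_A[U(\tau\otimes\eta)U^\dagger]$ for some unitary $U$ on $X\otimes A$ commuting with the total Hamiltonian for spacings $\boldsymbol{\Delta}$ and some state $\eta$ on $A$ commuting with $H_A(\boldsymbol{\Delta})$. Then for every $\boldsymbol{\Delta}'\in\mathbb{R}^k$, the same density operators satisfy $\tau'=\mathrm{Tr}_A[U'(\tau\otimes\eta')U'^\dagger]$ for some unitary $U'$ commuting with the total Hamiltonian for spacings $\boldsymbol{\Delta}'$ and some state $\eta'$ commuting with $H_A(\boldsymbol{\Delta}')$; i.e., the transformation $\tau\mapsto\tau'$ is also achievable by a covariant operation on $X(\boldsymbol{\Delta}')$.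
   Context: A ladder system $L(\Delta)$ with energy interval $\Delta\in\mathbb{R}$ is the Hilbert space with orthonormal basis $\{|n,a\rangle:n\in\mathbb{Z},a\in\mathbb{N}\}$ and Hamiltonian $H|n,a\rangle=n\Delta|n,a\rangle$ (the label $a$ indexes degeneracy). Changing $\boldsymbol{\Delta}$ changes only the Hamiltonian, not the Hilbert space, so a density operator can be regarded as a state on $X(\boldsymbol{\Delta})$ for every $\boldsymbol{\Delta}$. A set of reals is linearly independent over $\mathbb{Q}$ if no element is a rational linear combination of the others. *)

theory Defs
  imports "HOL-Analysis.Analysis"
begin

text \<open>Operators on l2 of a countable index set are represented by their matrices
  with respect to the standard orthonormal basis: M i j = <e_i, M e_j>.\<close>

text \<open>Basis labels of X = tensor of k ladders L(Delta_i): |n,a> with n : 'k => int, a : 'k => nat.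
  The same label type is used for the ancilla A.\<close>
type_synonym 'k idx = "('k \<Rightarrow> int) \<times> ('k \<Rightarrow> nat)"

text \<open>Eigenvalue of the sum Hamiltonian H(Delta) on the basis vector |n,a>.\<close>
definition energy :: "('k::finite \<Rightarrow> real) \<Rightarrow> 'k idx \<Rightarrow> real" where
  "energy \<Delta> x = (\<Sum>i\<in>UNIV. real_of_int (fst x i) * \<Delta> i)"

definition tot_energy :: "('k::finite \<Rightarrow> real) \<Rightarrow> 'k idx \<times> 'k idx \<Rightarrow> real" where
  "tot_energy \<Delta> p = energy \<Delta> (fst p) + energy \<Delta> (snd p)"

definition rat_lin_indep :: "('k::finite \<Rightarrow> real) \<Rightarrow> bool" where
  "rat_lin_indep \<Delta> \<longleftrightarrow>
     (\<forall>q :: 'k \<Rightarrow> rat. (\<Sum>i\<in>UNIV. of_rat (q i) * \<Delta> i) = 0 \<longrightarrow> (\<forall>i. q i = 0))"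

text \<open>Density operator: positive semidefinite (every finite section) with trace 1
  (absolutely convergent diagonal sum).  This determines a positive trace-class operator.\<close>
definition density_op :: "('a \<Rightarrow> 'a \<Rightarrow> complex) \<Rightarrow> bool" where
  "density_op \<rho> \<longleftrightarrow>
     (\<forall>F (v :: 'a \<Rightarrow> complex). finite F \<longrightarrow>
        Im (\<Sum>i\<in>F. \<Sum>j\<in>F. cnj (v i) * \<rho> i j * v j) = 0 \<and>
        Re (\<Sum>i\<in>F. \<Sum>j\<in>F. cnj (v i) * \<rho> i j * v j) \<ge> 0)
     \<and> ((\<lambda>i. \<rho> i i) has_sum 1) UNIV"

definition unitary_mat :: "('a \<Rightarrow> 'a \<Rightarrow> complex) \<Rightarrow> bool" where
  "unitary_mat U \<longleftrightarrow>
     (\<forall>j j'. ((\<lambda>i. cnj (U i j) * U i j') has_sum (if j = j' then 1 else 0)) UNIV) \<and>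
     (\<forall>i i'. ((\<lambda>j. U i j * cnj (U i' j)) has_sum (if i = i' then 1 else 0)) UNIV)"

text \<open>A bounded operator commutes with a Hamiltonian diagonal in the basis (eigenvalue E)
  iff its matrix is block diagonal w.r.t. energy: (H M)_{ij} = E i M_{ij} = M_{ij} E j = (M H)_{ij}.\<close>
definition commutes_diag :: "('a \<Rightarrow> real) \<Rightarrow> ('a \<Rightarrow> 'a \<Rightarrow> complex) \<Rightarrow> bool" where
  "commutes_diag E M \<longleftrightarrow> (\<forall>i j. complex_of_real (E i) * M i j = M i j * complex_of_real (E j))"

definition tensor_mat :: "('a \<Rightarrow> 'a \<Rightarrow> complex) \<Rightarrow> ('b \<Rightarrow> 'b \<Rightarrow> complex)
    \<Rightarrow> ('a \<times> 'b \<Rightarrow> 'a \<times> 'b \<Rightarrow> complex)" where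
  "tensor_mat \<rho> \<sigma> p q = \<rho> (fst p) (fst q) * \<sigma> (snd p) (snd q)"

text \<open>Tr_A [ U \<rho> U^dagger ]  (all sums converge absolutely for unitary U and density \<rho>).\<close>
definition channel_out :: "('a \<times> 'b \<Rightarrow> 'a \<times> 'b \<Rightarrow> complex) \<Rightarrow> ('a \<times> 'b \<Rightarrow> 'a \<times> 'b \<Rightarrow> complex)
    \<Rightarrow> ('a \<Rightarrow> 'a \<Rightarrow> complex)" where
  "channel_out U \<rho> x x' =
     (\<Sum>\<^sub>\<infinity>a. \<Sum>\<^sub>\<infinity>(j, j'). U (x, a) j * \<rho> j j' * cnj (U (x', a) j'))"

definition covariant_achievable ::
  "('k::finite \<Rightarrow> real) \<Rightarrow> ('k idx \<Rightarrow> 'k idx \<Rightarrow> complex) \<Rightarrow> ('k idx \<Rightarrow> 'k idx \<Rightarrow> complex) \<Rightarrow> bool" where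
  "covariant_achievable \<Delta> \<tau> \<tau>' \<longleftrightarrow>
     (\<exists>(U :: 'k idx \<times> 'k idx \<Rightarrow> 'k idx \<times> 'k idx \<Rightarrow> complex) (\<eta> :: 'k idx \<Rightarrow> 'k idx \<Rightarrow> complex).
        unitary_mat U \<and> commutes_diag (tot_energy \<Delta>) U \<and>
        density_op \<eta> \<and> commutes_diag (energy \<Delta>) \<eta> \<and>
        \<tau>' = channel_out U (tensor_mat \<tau> \<eta>))"

end

theory Submission
  imports Defs
begin

text \<open>An operator commutes with a diagonal Hamiltonian exactly when it only connects basis
  vectors of equal energy.  For rationally independent spacings the energy of a basis vector
  determines its integer occupation vector, so two vectors of equal energy for \<open>\<Delta>\<close> have
  equal energy for every \<open>\<Delta>'\<close>; hence every covariant unitary and every covariant ancilla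
  state for \<open>\<Delta>\<close> is also covariant for \<open>\<Delta>'\<close>, and the same dilation works.\<close>

lemma commutes_diag_iff: "commutes_diag E M \<longleftrightarrow> (\<forall>i j. M i j \<noteq> 0 \<longrightarrow> E i = E j)"
proof -
  have "complex_of_real (E i) * M i j = M i j * complex_of_real (E j) \<longleftrightarrow>
        (M i j \<noteq> 0 \<longrightarrow> E i = E j)" for i j
    by (cases "M i j = 0") (auto simp: mult.commute)
  then show ?thesis
    unfolding commutes_diag_def by blast
qed

lemma commutes_diag_transfer:
  assumes "commutes_diag E M" and "\<And>i j. E i = E j \<Longrightarrow> E' i = E' j"
  shows "commutes_diag E' M"
  using assms unfolding commutes_diag_iff by blast

lemma rat_lin_indep_int_comb_inject:
  fixes \<Delta> :: "'k::finite \<Rightarrow> real"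
  assumes "rat_lin_indep \<Delta>"
    and "(\<Sum>i\<in>UNIV. real_of_int (n i) * \<Delta> i) = (\<Sum>i\<in>UNIV. real_of_int (m i) * \<Delta> i)"
  shows "n = m"
proof -
  let ?q = "\<lambda>i. of_int (n i - m i) :: rat"
  have "(\<Sum>i\<in>UNIV. of_rat (?q i) * \<Delta> i)
        = (\<Sum>i\<in>UNIV. real_of_int (n i) * \<Delta> i) - (\<Sum>i\<in>UNIV. real_of_int (m i) * \<Delta> i)"
    by (simp add: sum_subtractf[symmetric] of_rat_diff algebra_simps)
  also have "\<dots> = 0"
    using assms(2) by simp
  finally have "?q i = 0" for i
    by (rule assms(1)[unfolded rat_lin_indep_def, rule_format])
  then show ?thesis
    by auto
qed

lemma rat_lin_indep_int_comb_eq_transfer: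
  fixes \<Delta> \<Delta>' :: "'k::finite \<Rightarrow> real"
  assumes "rat_lin_indep \<Delta>"
    and "(\<Sum>i\<in>UNIV. real_of_int (n i) * \<Delta> i) = (\<Sum>i\<in>UNIV. real_of_int (m i) * \<Delta> i)"
  shows "(\<Sum>i\<in>UNIV. real_of_int (n i) * \<Delta>' i) = (\<Sum>i\<in>UNIV. real_of_int (m i) * \<Delta>' i)"
  using rat_lin_indep_int_comb_inject[OF assms] by simp

lemma tot_energy_eq_int_comb:
  "tot_energy \<Delta> p = (\<Sum>i\<in>UNIV. real_of_int (fst (fst p) i + fst (snd p) i) * \<Delta> i)"
  unfolding tot_energy_def energy_def by (simp add: sum.distrib[symmetric] algebra_simps)

lemma energy_eq_transfer:
  assumes "rat_lin_indep \<Delta>" and "energy \<Delta> x = energy \<Delta> y"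
  shows "energy \<Delta>' x = energy \<Delta>' y"
  using rat_lin_indep_int_comb_eq_transfer[OF assms(1), of "fst x" "fst y"] assms(2)
  unfolding energy_def .

lemma tot_energy_eq_transfer:
  assumes "rat_lin_indep \<Delta>" and "tot_energy \<Delta> p = tot_energy \<Delta> q"
  shows "tot_energy \<Delta>' p = tot_energy \<Delta>' q"
  using rat_lin_indep_int_comb_eq_transfer[OF assms(1),
      of "\<lambda>i. fst (fst p) i + fst (snd p) i" "\<lambda>i. fst (fst q) i + fst (snd q) i"] assms(2)
  unfolding tot_energy_eq_int_comb .

theorem mainTheorem9:
  fixes \<Delta> \<Delta>' :: "'k::finite \<Rightarrow> real"
    and \<tau> \<tau>' :: "'k idx \<Rightarrow> 'k idx \<Rightarrow> complex"
  assumes "rat_lin_indep \<Delta>"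
    and "density_op \<tau>" and "density_op \<tau>'"
    and "covariant_achievable \<Delta> \<tau> \<tau>'"
  shows "covariant_achievable \<Delta>' \<tau> \<tau>'"
proof -
  obtain U \<eta> where U: "unitary_mat U" "commutes_diag (tot_energy \<Delta>) U"
    and \<eta>: "density_op \<eta>" "commutes_diag (energy \<Delta>) \<eta>"
    and \<tau>': "\<tau>' = channel_out U (tensor_mat \<tau> \<eta>)"
    using assms(4) unfolding covariant_achievable_def by blast
  have "commutes_diag (tot_energy \<Delta>') U"
    using commutes_diag_transfer[OF U(2) tot_energy_eq_transfer[OF assms(1)]] .
  moreover have "commutes_diag (energy \<Delta>') \<eta>"
    using commutes_diag_transfer[OF \<eta>(2) energy_eq_transfer[OF assms(1)]] .
  ultimately show ?thesis
    unfolding covariant_achievable_def using U(1) \<eta>(1) \<tau>' by blast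
qed

end
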